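(* Consider the two-dimensional Poisson regression model with interaction and $\boldsymbol{\beta}=(\beta_0,\beta_1,\beta_2,\beta_{12})^\top$ with $\beta_0\in\mathbb{R}$, $\beta_1,\beta_2<0$ and $\beta_{12}\le 0$. Let $\rho=-\beta_{12}/(\beta_1\beta_2)$, and let $t=(\sqrt{1+8\rho}-1)/(2\rho)$ if $\beta_{12}<0$ and $t=2$ if $\beta_{12}=0$. Then the design which assigns equal weights $1/4$ to the four settings $\mathbf{x}_0=(0,0)$, $\mathbf{x}_1=(2/|\beta_1|,0)$, $\mathbf{x}_2=(0,2/|\beta_2|)$ and $\mathbf{x}_3=(t/|\beta_1|,t/|\beta_2|)$ is locally $D$-optimal at $\boldsymbol{\beta}$ on $\mathcal{X}=[0,\infty)^2$.
   Context: In the two-dimensional Poisson regression model with interaction, an observation $Y$ at setting $\mathbf{x}=(x_1,x_2)$ is Poisson distributed with mean $\lambda(\mathbf{x})=\exp(\mathbf{f}(\mathbf{x})^\top\boldsymbol{\beta})$, where $\mathbf{f}(\mathbf{x})=(1,x_1,x_2,x_1x_2)^\top$. An (approximate) design $\xi$ on $\mathcal{X}$ is a finite collection of mutually distinct settings $\mathbf{x}_0,\dots,\mathbf{x}_{n-1}\in\mathcal{X}$ with weights $w_i\ge 0$, $\sum_i w_i=1$; its information matrix is $\mathbf{M}_{\boldsymbol{\beta}}(\xi)=\sum_i w_i\lambda(\mathbf{x}_i)\mathbf{f}(\mathbf{x}_i)\mathbf{f}(\mathbf{x}_i)^\top$. A design is locally $D$-optimal at $\boldsymbol{\beta}$ on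 $\mathcal{X}$ if it maximizes $\det\mathbf{M}_{\boldsymbol{\beta}}(\xi)$ over all designs on $\mathcal{X}$. *)

theory Defs
  imports "HOL-Analysis.Analysis"
begin

text \<open>Regression function f(x) = (1, x1, x2, x1 x2) and parameter beta in R^4,
  components indexed 1..4 as (beta0, beta1, beta2, beta12).\<close>

definition regf :: "real \<times> real \<Rightarrow> real ^ 4" where
  "regf x = vector [1, fst x, snd x, fst x * snd x]"

definition intensity :: "real ^ 4 \<Rightarrow> real \<times> real \<Rightarrow> real" where
  "intensity \<beta> x = exp (regf x \<bullet> \<beta>)"

definition is_design :: "(real \<times> real) set \<Rightarrow> ((real \<times> real) \<times> real) list \<Rightarrow> bool" where
  "is_design X \<xi> \<longleftrightarrow> distinct (map fst \<xi>) \<and> (\<forall>(x, w) \<in> set \<xi>. x \<in> X \<and> w \<ge> 0)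
     \<and> sum_list (map snd \<xi>) = 1"

definition info_matrix :: "real ^ 4 \<Rightarrow> ((real \<times> real) \<times> real) list \<Rightarrow> real ^ 4 ^ 4" where
  "info_matrix \<beta> \<xi> = sum_list (map (\<lambda>(x, w). (w * intensity \<beta> x) *\<^sub>R
      (\<chi> i j. regf x $ i * regf x $ j)) \<xi>)"

definition locally_D_optimal :: "real ^ 4 \<Rightarrow> (real \<times> real) set \<Rightarrow> ((real \<times> real) \<times> real) list \<Rightarrow> bool" where
  "locally_D_optimal \<beta> X \<xi> \<longleftrightarrow> is_design X \<xi> \<and>
     (\<forall>\<eta>. is_design X \<eta> \<longrightarrow> det (info_matrix \<beta> \<eta>) \<le> det (info_matrix \<beta> \<xi>))"

end

theory Submission
  imports Defs
begin

(* Let l = (l_1, ..., l_4) be the Lagrange basis of span {1, x1, x2, x1 x2} for the four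
   support points x_k, so that f(x) = F^T l(x) where F has the rows f(x_k).  Every information
   matrix then factors as M(eta) = F^T N(eta) F with the positive semidefinite matrix
   N(eta) = sum_i w_i lambda(x_i) l(x_i) l(x_i)^T, so det M(eta) = det(F)^2 det N(eta).
   Hadamard's inequality bounds det N(eta) by the product of its diagonal entries, and the
   sensitivity inequality lambda(x) sum_k l_k(x)^2 / lambda(x_k) <= 1 on the design region
   bounds the weighted trace sum_k N(eta)_kk / lambda(x_k) by 1.  By AM-GM,
   det N(eta) <= prod_k lambda(x_k) / 4^4 = det N(xi).

   In the coordinates u = |beta1| x1, w = |beta2| x2 the sensitivity inequality is a
   two-variable inequality between elementary functions.  For fixed u + w + rho u w its left
   side is a convex quadratic in u w, so it suffices to prove it on the axes and on the
   diagonal u = w, where it follows from the sign of a derivative. *)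

section \<open>Elementary inequalities\<close>

lemma exp_two_bounds: "7 \<le> exp (2::real)" "exp (2::real) \<le> 15/2"
proof -
  have e: "27/10 \<le> exp (1::real)" "exp (1::real) \<le> 272/100"
    using e_approx_32 e_less_272 by (auto simp: abs_if split: if_splits)
  have "exp (2::real) = exp 1 * exp 1" by (simp add: exp_add[symmetric])
  then show "7 \<le> exp (2::real)" "exp (2::real) \<le> 15/2"
    using mult_mono[OF e(1) e(1)] mult_mono[OF e(2) e(2)] by auto
qed

lemma linear_le_const_add_cubic:
  fixes a B C D :: real
  assumes "0 \<le> a" "0 \<le> B" "0 \<le> C" "0 < D" and "4 * B^3 \<le> 27 * C^2 * D"
  shows "B * a \<le> C + D * a^3"
proof -
  define w where "w = sqrt (B / (3 * D))"
  have w: "0 \<le> w" "B = 3 * D * w^2"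
    using assms by (auto simp: w_def)
  have "(2 * D * w^3)^2 \<le> C^2"
    using assms w by (simp add: field_simps power2_eq_square power3_eq_cube)
  then have "2 * D * w^3 \<le> C"
    using \<open>0 \<le> C\<close> by (rule power2_le_imp_le)
  moreover have "C + D * a^3 - B * a = D * (a - w)^2 * (a + 2 * w) + (C - 2 * D * w^3)"
    unfolding w(2) by (simp add: power2_eq_square power3_eq_cube algebra_simps)
  moreover have "0 \<le> D * (a - w)^2 * (a + 2 * w)"
    using assms w by simp
  ultimately show ?thesis by linarith
qed

lemma convex_quadratic_le_max:
  fixes \<alpha> \<beta> \<gamma> c C :: real
  assumes "0 \<le> \<alpha>" "0 \<le> c" "c \<le> C"
  shows "\<alpha> * c^2 + \<beta> * c + \<gamma> \<le> max \<gamma> (\<alpha> * C^2 + \<beta> * C + \<gamma>)"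
proof -
  have "\<alpha> * c^2 + \<beta> * c \<le> c * (\<alpha> * C + \<beta>)"
    using assms mult_left_mono[of c C "\<alpha> * c"] by (simp add: power2_eq_square algebra_simps)
  moreover have "c * (\<alpha> * C + \<beta>) \<le> max 0 (C * (\<alpha> * C + \<beta>))"
    using assms mult_right_mono[of c C "\<alpha> * C + \<beta>"] mult_nonneg_nonpos[of c "\<alpha> * C + \<beta>"]
    by (cases "0 \<le> \<alpha> * C + \<beta>") auto
  ultimately show ?thesis by (simp add: power2_eq_square algebra_simps)
qed

lemma mult_le_sq_if_sum_le:
  fixes \<rho> u w r :: real
  assumes "0 \<le> \<rho>" "0 \<le> u" "0 \<le> w" "0 \<le> r" and "u + w + \<rho> * u * w \<le> 2 * r + \<rho> * r^2"
  shows "u * w \<le> r^2"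
proof -
  define m where "m = sqrt (u * w)"
  have m: "0 \<le> m" "m^2 = u * w" "2 * m \<le> u + w"
    using assms arith_geo_mean_sqrt[of u w] by (auto simp: m_def)
  have "m \<le> r"
  proof (rule ccontr)
    assume "\<not> m \<le> r"
    then have "2 * r < 2 * m" "\<rho> * r^2 \<le> \<rho> * m^2"
      using assms by (auto intro!: mult_left_mono power_mono)
    then show False using m assms by (simp add: mult.assoc)
  qed
  then show ?thesis using m power_mono[of m r 2] by simp
qed

lemma exists_nonneg_quadratic_root:
  fixes \<rho> \<eta> :: real
  assumes "0 \<le> \<rho>" "0 \<le> \<eta>"
  obtains r where "0 \<le> r" "2 * r + \<rho> * r^2 = \<eta>"
proof -
  have "\<exists>r. 0 \<le> r \<and> r \<le> \<eta> \<and> 2 * r + \<rho> * r^2 = \<eta>"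
    using assms by (intro IVT') (auto intro!: continuous_intros)
  then show ?thesis using that by blast
qed

lemma prod_le_inverse_card_power:
  fixes d :: "'a \<Rightarrow> real"
  assumes S: "finite S" "S \<noteq> {}" and d: "\<And>i. i \<in> S \<Longrightarrow> 0 \<le> d i" and "sum d S \<le> 1"
  shows "prod d S \<le> (1 / card S) ^ card S"
proof (cases "prod d S = 0")
  case False
  then have pos: "0 < prod d S" using d by (simp add: less_le prod_nonneg)
  have "prod d S powr (1 / card S) \<le> (\<Sum>i\<in>S. d i / card S)"
    using S d by (rule arith_geom_mean)
  also have "\<dots> \<le> 1 / card S"
    using \<open>sum d S \<le> 1\<close> by (simp add: sum_divide_distrib[symmetric] divide_right_mono)
  finally have "(prod d S powr (1 / card S)) ^ card S \<le> (1 / card S) ^ card S"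
    by (rule power_mono) simp
  moreover have "(prod d S powr (1 / card S)) ^ card S = prod d S powr (card S * (1 / card S))"
    using pos by (simp only: powr_power[of "prod d S"])
  moreover have "real (card S) \<noteq> 0" using S by simp
  ultimately show ?thesis using pos by simp
qed simp

lemma le_max_endpoints_if_single_crossing:
  fixes R M k :: "real \<Rightarrow> real"
  assumes deriv: "\<And>x. 0 \<le> x \<Longrightarrow> (R has_real_derivative (x - 1) * M x * k x) (at x)"
    and k_pos: "\<And>x. 0 \<le> x \<Longrightarrow> 0 < k x"
    and crossing: "\<And>x y. 0 \<le> x \<Longrightarrow> x \<le> y \<Longrightarrow> M x \<le> 0 \<Longrightarrow> M y \<le> 0"
    and "M 1 \<le> 0" and "0 \<le> a"
  shows "R a \<le> max (R 0) (R 1)"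
proof -
  consider "1 \<le> a" | "a < 1" "0 < M a" | "a < 1" "M a \<le> 0" by linarith
  then show ?thesis
  proof cases
    case 1
    have "R a \<le> R 1"
    proof (rule DERIV_nonpos_imp_nonincreasing[OF 1])
      fix x assume x: "1 \<le> x" "x \<le> a"
      then have "M x \<le> 0" using crossing[of 1 x] \<open>M 1 \<le> 0\<close> by simp
      then show "\<exists>y. (R has_real_derivative y) (at x) \<and> y \<le> 0"
        using deriv[of x] k_pos[of x] x by (auto simp: mult_le_0_iff)
    qed
    then show ?thesis by simp
  next
    case 2
    have "R a \<le> R 0"
    proof (rule DERIV_nonpos_imp_nonincreasing[OF \<open>0 \<le> a\<close>])
      fix x assume x: "0 \<le> x" "x \<le> a"
      then have "0 < M x" using crossing[of x a] 2 by force
      then show "\<exists>y. (R has_real_derivative y) (at x) \<and> y \<le> 0"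
        using deriv[of x] k_pos[of x] x 2 by (auto simp: mult_le_0_iff)
    qed
    then show ?thesis by simp
  next
    case 3
    have "R a \<le> R 1"
    proof (rule DERIV_nonneg_imp_nondecreasing[of a 1])
      fix x assume x: "a \<le> x" "x \<le> 1"
      then have "M x \<le> 0" using crossing[of a x] 3 \<open>0 \<le> a\<close> by simp
      then show "\<exists>y. (R has_real_derivative y) (at x) \<and> 0 \<le> y"
        using deriv[of x] k_pos[of x] x \<open>0 \<le> a\<close> by (auto simp: zero_le_mult_iff)
    qed (use 3 in simp)
    then show ?thesis by simp
  qed
qed

lemma single_crossing_if_deriv_le:
  fixes M M' :: "real \<Rightarrow> real"
  assumes "0 < M 0"
    and deriv: "\<And>x. 0 < x \<Longrightarrow> (M has_real_derivative M' x) (at x)"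
    and slope: "\<And>x. 0 < x \<Longrightarrow> x * M' x \<le> 2 * M x"
    and "0 \<le> x" "x \<le> y" "M x \<le> 0"
  shows "M y \<le> 0"
proof -
  have "0 < x" using assms by (cases "x = 0") auto
  have "M y / y^2 \<le> M x / x^2"
  proof (rule DERIV_nonpos_imp_nonincreasing[OF \<open>x \<le> y\<close>])
    fix s assume s: "x \<le> s" "s \<le> y"
    then have "0 < s" using \<open>0 < x\<close> by simp
    have "((\<lambda>s. M s / s^2) has_real_derivative (M' s * s^2 - M s * (2 * s)) / (s^2)^2) (at s)"
      using \<open>0 < s\<close> by (auto intro!: derivative_eq_intros deriv)
    moreover have "(M' s * s^2 - M s * (2 * s)) / (s^2)^2 \<le> 0"
      using slope[OF \<open>0 < s\<close>] \<open>0 < s\<close>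
      by (simp add: divide_le_0_iff power2_eq_square mult_le_0_iff algebra_simps)
    ultimately show "\<exists>d. ((\<lambda>s. M s / s^2) has_real_derivative d) (at s) \<and> d \<le> 0" by blast
  qed
  also have "\<dots> \<le> 0" using \<open>M x \<le> 0\<close> by (simp add: divide_nonpos_nonneg)
  finally show ?thesis using \<open>0 < x\<close> \<open>x \<le> y\<close> by (simp add: divide_le_0_iff)
qed

section \<open>The sensitivity inequality in standardized coordinates\<close>

lemma axis_sensitivity_le_exp:
  fixes z :: real
  assumes "0 \<le> z"
  shows "(1 - z)^2 + exp 2 * z^2 \<le> exp (2 * z)"
proof -
  let ?q = "exp (2::real)"
  define R where "R x = exp (- 2 * x) * ((1 - x)^2 + ?q * x^2)" for x
  have "R z \<le> max (R 0) (R 1)"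
  proof (rule le_max_endpoints_if_single_crossing[where M = "\<lambda>x. 2 * (2 - (1 + ?q) * x)"
        and k = "\<lambda>x. exp (- 2 * x)"])
    show "(R has_real_derivative (x - 1) * (2 * (2 - (1 + ?q) * x)) * exp (- 2 * x)) (at x)" for x
      unfolding R_def by (auto intro!: derivative_eq_intros simp: algebra_simps power2_eq_square)
    show "2 * (2 - (1 + ?q) * y) \<le> 0" if "x \<le> y" "2 * (2 - (1 + ?q) * x) \<le> 0" for x y
      using that mult_left_mono[OF \<open>x \<le> y\<close>, of "1 + ?q"] by (simp add: mult.commute)
    show "2 * (2 - (1 + ?q) * 1) \<le> 0"
      using exp_two_bounds by simp
  qed (use assms in auto)
  also have "\<dots> = 1"
    by (simp add: R_def exp_minus field_simps)
  finally have "exp (2 * z) * R z \<le> exp (2 * z)"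
    by simp
  then show ?thesis
    by (simp add: R_def mult.assoc[symmetric] exp_add[symmetric])
qed

(* With P a the left side of diagonal_sensitivity_le_exp, the derivative of
   exp (- 2 t a - (2 - t) a^2) * P a is (a - 1) * exp (- 2 t a - (2 - t) a^2) times this
   polynomial at q = exp 2, E = exp (t + 2), x = a. *)
definition diagonal_crossing_poly :: "real \<Rightarrow> real \<Rightarrow> real \<Rightarrow> real \<Rightarrow> real" where
  "diagonal_crossing_poly q E t x = 4 * t
     + (8 - 2*t - 6*t^2 - t^2*q) * x
     + (8 - 20*t + 8*t^2 + 2*t^2*q + 2*t^3 + t^3*q) * x^2
     + (-4 - 4*E + 8*t^2 + 2*t^2*q - 4*t^3 - 2*t^3*q) * x^3
     + (t - 2) * (2*E + 2*(t - 1)^2 + q*t^2) * x^4"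

lemma diagonal_crossing_poly_one_nonpos:
  assumes "0 < t" "t \<le> 2" "7 \<le> q" "q * (1 + t) \<le> E"
  shows "diagonal_crossing_poly q E t 1 \<le> 0"
proof -
  have "(8 - 2*t) * q \<le> (8 - 2*t) * E"
    using assms
    by (intro mult_left_mono) (auto simp: algebra_simps intro: order_trans[of _ "q * (1 + t)"])
  then have "diagonal_crossing_poly q E t 1 \<le> (t - 2) * (2*t - 4 + q*t + 4*q)"
    by (simp add: diagonal_crossing_poly_def algebra_simps power2_eq_square power3_eq_cube)
  also have "\<dots> \<le> 0"
  proof (rule mult_nonpos_nonneg)
    have "0 \<le> q * t" using assms by simp
    then show "0 \<le> 2*t - 4 + q*t + 4*q" using assms by linarith
  qed (use assms in simp)
  finally show ?thesis .
qed

lemma diagonal_crossing_poly_single_crossing: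
  assumes t: "0 < t" "t \<le> 2" and q: "7 \<le> q" "q \<le> 15/2" and E: "q * (1 + t) \<le> E"
    and "0 \<le> x" "x \<le> y" "diagonal_crossing_poly q E t x \<le> 0"
  shows "diagonal_crossing_poly q E t y \<le> 0"
proof -
  define c1 where "c1 = 8 - 2*t - 6*t^2 - t^2*q"
  define c2 where "c2 = 8 - 20*t + 8*t^2 + 2*t^2*q + 2*t^3 + t^3*q"
  define c3 where "c3 = -4 - 4*E + 8*t^2 + 2*t^2*q - 4*t^3 - 2*t^3*q"
  define c4 where "c4 = (t - 2) * (2*E + 2*(t - 1)^2 + q*t^2)"
  let ?M = "diagonal_crossing_poly q E t"
  have M: "?M z = 4*t + c1*z + c2*z^2 + c3*z^3 + c4*z^4" for z
    by (simp add: diagonal_crossing_poly_def c1_def c2_def c3_def c4_def)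
  have c1: "- c1 \<le> (6 + q) * t^2"
    using t by (simp add: c1_def algebra_simps)
  have c3: "c3 \<le> - (4 + 2*q) * t^3"
  proof -
    have "(8 + 2*q) * t^2 \<le> (8 + 2*q) * 2 * t"
      using t q mult_left_mono[of t 2 "(8 + 2*q) * t"] by (simp add: power2_eq_square mult_ac)
    then show ?thesis using E t q by (simp add: c3_def algebra_simps)
  qed
  have c4: "c4 \<le> 0"
    unfolding c4_def
  proof (rule mult_nonpos_nonneg)
    have "0 \<le> q * (1 + t)" using t q by simp
    then show "0 \<le> 2*E + 2*(t - 1)^2 + q*t^2" using E q by (simp add: add_nonneg_nonneg)
  qed (use t in simp)
  have cubic: "4 * ((6 + q) * t^2)^3 \<le> 27 * (8 * t)^2 * ((4 + 2*q) * t^3)"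
  proof -
    have "(6 + q)^3 \<le> (27/2)^3"
      using q by (intro power_mono) auto
    then have "4 * t * (6 + q)^3 \<le> 8 * (27/2)^3"
      using t q by (intro mult_mono) auto
    then have "4 * t * (6 + q)^3 \<le> 1728 * (4 + 2*q)"
      using q by (simp add: power_divide)
    then have "(4 * t * (6 + q)^3) * t^5 \<le> (1728 * (4 + 2*q)) * t^5"
      using t by (intro mult_right_mono) auto
    moreover have "4 * ((6 + q) * t^2)^3 = (4 * t * (6 + q)^3) * t^5"
      "27 * (8 * t)^2 * ((4 + 2*q) * t^3) = (1728 * (4 + 2*q)) * t^5"
      by algebra+
    ultimately show ?thesis by simp
  qed
  have slope: "z * (c1 + 2*c2*z + 3*c3*z^2 + 4*c4*z^3) \<le> 2 * ?M z" if "0 < z" for z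
  proof -
    have "(6 + q) * t^2 * z \<le> 8 * t + (4 + 2*q) * t^3 * z^3"
      using that t q cubic by (intro linear_le_const_add_cubic) auto
    moreover have "- c1 * z \<le> (6 + q) * t^2 * z"
      by (rule mult_right_mono) (use that c1 in auto)
    moreover have "c3 * z^3 \<le> - (4 + 2*q) * t^3 * z^3"
      by (rule mult_right_mono) (use that c3 in auto)
    moreover have "c4 * z^4 \<le> 0"
      using that c4 by (simp add: mult_nonpos_nonneg)
    ultimately show ?thesis
      unfolding M by (simp add: algebra_simps power2_eq_square power3_eq_cube power4_eq_xxxx)
  qed
  show ?thesis
  proof (rule single_crossing_if_deriv_le
      [where M = ?M and M' = "\<lambda>z. c1 + 2*c2*z + 3*c3*z^2 + 4*c4*z^3"])
    show "0 < ?M 0" using t by (simp add: M)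
    show "(?M has_real_derivative c1 + 2*c2*z + 3*c3*z^2 + 4*c4*z^3) (at z)" for z
      unfolding M by (auto intro!: derivative_eq_intros simp: algebra_simps)
  qed (use slope assms in auto)
qed

lemma diagonal_sensitivity_le_exp:
  fixes a t :: real
  assumes "0 \<le> a" "0 < t" "t \<le> 2"
  shows "(1 - a)^2 * (1 + a - t*a)^2 + exp 2 * t^2/2 * a^2 * (1 - a)^2 + exp (t + 2) * a^4
           \<le> exp (2*t*a + (2 - t) * a^2)"
proof -
  let ?q = "exp (2::real)" and ?E = "exp (t + 2)"
  define X where "X x = 2*t*x + (2 - t) * x^2" for x
  define P where "P x = (1 - x)^2 * (1 + x - t*x)^2 + ?q * t^2/2 * x^2 * (1 - x)^2 + ?E * x^4" for x
  define R where "R x = exp (- X x) * P x" for x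
  have E: "?q * (1 + t) \<le> ?E"
    using exp_ge_add_one_self[of t] by (simp add: exp_add mult.commute)
  have "R a \<le> max (R 0) (R 1)"
  proof (rule le_max_endpoints_if_single_crossing[where M = "diagonal_crossing_poly ?q ?E t"
        and k = "\<lambda>x. exp (- X x)"])
    fix x
    have X: "(X has_real_derivative 2*t + 2*(2 - t)*x) (at x)"
      unfolding X_def by (auto intro!: derivative_eq_intros)
    have "(P has_real_derivative
        (x - 1) * diagonal_crossing_poly ?q ?E t x + (2*t + 2*(2 - t)*x) * P x) (at x)"
      unfolding P_def diagonal_crossing_poly_def
      by (auto intro!: derivative_eq_intros simp: field_simps power2_eq_square power3_eq_cube
          power4_eq_xxxx)
    then show
      "(R has_real_derivative (x - 1) * diagonal_crossing_poly ?q ?E t x * exp (- X x)) (at x)"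
      unfolding R_def by (auto intro!: derivative_eq_intros X simp: algebra_simps)
    show "diagonal_crossing_poly ?q ?E t y \<le> 0"
      if "0 \<le> x" "x \<le> y" "diagonal_crossing_poly ?q ?E t x \<le> 0" for x y
      using diagonal_crossing_poly_single_crossing[OF _ _ exp_two_bounds E] assms that by blast
    show "diagonal_crossing_poly ?q ?E t 1 \<le> 0"
      using diagonal_crossing_poly_one_nonpos[OF _ _ exp_two_bounds(1) E] assms by blast
  qed (use assms in auto)
  also have "\<dots> = 1"
  proof -
    have "X 0 = 0" "P 0 = 1" "X 1 = t + 2" "P 1 = ?E" by (simp_all add: X_def P_def)
    then show ?thesis by (simp add: R_def exp_add[symmetric])
  qed
  finally have "exp (X a) * R a \<le> exp (X a)"
    by simp
  then show ?thesis
    by (simp add: R_def X_def P_def mult.assoc[symmetric] exp_add[symmetric])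
qed

lemma vector_4_nth [simp]:
  "(vector [a, b, c, d] :: 'a::zero^4) $ 1 = a"
  "(vector [a, b, c, d] :: 'a::zero^4) $ 2 = b"
  "(vector [a, b, c, d] :: 'a::zero^4) $ 3 = c"
  "(vector [a, b, c, d] :: 'a::zero^4) $ 4 = d"
  unfolding vector_def by simp_all

(* The Lagrange basis of span {1, u, w, u w} for the nodes (0, 0), (2, 0), (0, 2), (t, t). *)
definition std_lagrange_basis :: "real \<Rightarrow> real \<Rightarrow> real \<Rightarrow> real^4" where
  "std_lagrange_basis t u w = vector [1 - u/2 - w/2 + (t - 1) * u * w / t^2, u * (t - w) / (2 * t),
     w * (t - u) / (2 * t), u * w / t^2]"

lemma std_lagrange_basis_sensitivity:
  fixes t u w :: real
  assumes u: "0 \<le> u" and w: "0 \<le> w" and t: "0 < t" "t \<le> 2"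
  defines "l \<equiv> std_lagrange_basis t u w"
  shows "(l $ 1)^2 + exp 2 * (l $ 2)^2 + exp 2 * (l $ 3)^2 + exp (t + 2) * (l $ 4)^2
    \<le> exp (u + w + (2 - t) / t^2 * u * w)"
proof -
  let ?q = "exp (2::real)" and ?E = "exp (t + 2)"
  define \<rho> where "\<rho> = (2 - t) / t^2"
  define \<eta> where "\<eta> = u + w + \<rho> * u * w"
  have \<rho>: "0 \<le> \<rho>" using t by (simp add: \<rho>_def)
  then have "0 \<le> \<eta>" using u w by (simp add: \<eta>_def)
  then obtain r where r: "0 \<le> r" "2 * r + \<rho> * r^2 = \<eta>"
    using exists_nonneg_quadratic_root \<rho> by blast
  (* For fixed \<eta> the left side is a convex quadratic in c = u w / t^2, and c ranges between
     its values on the axis (c = 0) and on the diagonal point u = w = r. *)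
  define z where "z = \<eta> / 2"
  define c where "c = u * w / t^2"
  define \<alpha> where "\<alpha> = t^2/4 + ?q + ?E + ?q * t^2/4"
  define \<beta> where "\<beta> = t * (1 - z) - 2 * ?q * z - ?q * t^2/2"
  define \<gamma> where "\<gamma> = (1 - z)^2 + ?q * z^2"
  have "(l $ 1)^2 + ?q * (l $ 2)^2 + ?q * (l $ 3)^2 + ?E * (l $ 4)^2 = \<alpha> * c^2 + \<beta> * c + \<gamma>"
    using t by (simp add: l_def std_lagrange_basis_def \<alpha>_def \<beta>_def \<gamma>_def z_def c_def \<eta>_def \<rho>_def
        field_simps power2_eq_square)
  also have "\<dots> \<le> max \<gamma> (\<alpha> * ((r / t)^2)^2 + \<beta> * (r / t)^2 + \<gamma>)"
  proof (rule convex_quadratic_le_max)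
    have "u * w \<le> r^2"
      using \<rho> u w r by (intro mult_le_sq_if_sum_le) (auto simp: \<eta>_def)
    then show "c \<le> (r / t)^2"
      using t by (simp add: c_def power_divide divide_right_mono)
  qed (use u w in \<open>auto simp: \<alpha>_def c_def\<close>)
  also have "\<dots> \<le> exp \<eta>"
  proof (rule max.boundedI)
    show "\<gamma> \<le> exp \<eta>"
      using axis_sensitivity_le_exp[of z] \<open>0 \<le> \<eta>\<close> by (simp add: \<gamma>_def z_def)
    have "\<alpha> * ((r / t)^2)^2 + \<beta> * (r / t)^2 + \<gamma>
        = (1 - r/t)^2 * (1 + r/t - t * (r/t))^2 + ?q * t^2/2 * (r/t)^2 * (1 - r/t)^2 + ?E * (r/t)^4"
      using t by (simp add: \<alpha>_def \<beta>_def \<gamma>_def z_def r(2)[symmetric] \<rho>_def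
          field_simps power2_eq_square power4_eq_xxxx)
    also have "\<dots> \<le> exp (2 * t * (r/t) + (2 - t) * (r/t)^2)"
      using r t by (intro diagonal_sensitivity_le_exp) auto
    also have "2 * t * (r/t) + (2 - t) * (r/t)^2 = \<eta>"
      using t by (simp add: r(2)[symmetric] \<rho>_def field_simps power2_eq_square)
    finally show "\<alpha> * ((r / t)^2)^2 + \<beta> * (r / t)^2 + \<gamma> \<le> exp \<eta>" .
  qed
  finally show ?thesis by (simp add: \<eta>_def \<rho>_def)
qed

section \<open>Hadamard's inequality\<close>

definition outer :: "real^'n \<Rightarrow> real^'n^'n" where
  "outer v = (\<chi> i j. v$i * v$j)"

definition psd_matrix :: "real^'n^'n \<Rightarrow> bool" where
  "psd_matrix A \<longleftrightarrow> transpose A = A \<and> (\<forall>x. 0 \<le> x \<bullet> (A *v x))"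

lemma outer_mult_vec: "outer v *v x = (v \<bullet> x) *\<^sub>R v"
  by (simp add: outer_def matrix_vector_mult_def inner_vec_def vec_eq_iff sum_distrib_left mult_ac)

lemma psd_matrix_symmetric: "psd_matrix A \<Longrightarrow> A$j$i = A$i$j"
  unfolding psd_matrix_def by (metis transpose_def vec_lambda_beta)

lemma psd_matrix_zero: "psd_matrix 0"
  by (simp add: psd_matrix_def transpose_def vec_eq_iff)

lemma psd_matrix_add: "psd_matrix A \<Longrightarrow> psd_matrix B \<Longrightarrow> psd_matrix (A + B)"
  by (simp add: psd_matrix_def transpose_def vec_eq_iff matrix_vector_mult_add_rdistrib
      inner_add_right add_nonneg_nonneg)

lemma psd_matrix_scaleR: "psd_matrix A \<Longrightarrow> 0 \<le> c \<Longrightarrow> psd_matrix (c *\<^sub>R A)"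
  by (simp add: psd_matrix_def transpose_scalar scaleR_matrix_vector_assoc[symmetric])

lemma inner_outer_mult_vec: "x \<bullet> (outer v *v x) = (v \<bullet> x)\<^sup>2"
  by (simp add: outer_mult_vec inner_commute power2_eq_square)

lemma transpose_outer: "transpose (outer v) = outer v"
  by (simp add: transpose_def outer_def vec_eq_iff mult.commute)

lemma psd_matrix_outer: "psd_matrix (outer v)"
  by (simp add: psd_matrix_def inner_outer_mult_vec transpose_outer)

lemma psd_matrix_diag_nonneg:
  assumes "psd_matrix A"
  shows "0 \<le> A$i$i"
  using assms[unfolded psd_matrix_def] matrix_vector_mult_basis[of A i]
  by (metis cart_eq_inner_axis column_def inner_commute vec_lambda_beta)

lemma psd_matrix_zero_diag:
  assumes A: "psd_matrix A" and "A$i$i = 0"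
  shows "A$j$i = 0"
proof (rule ccontr)
  assume nz: "A$j$i \<noteq> 0"
  define s where "s = - (A$j$j + 1) / (2 * A$j$i)"
  define x where "x = s *\<^sub>R axis i 1 + axis j (1::real)"
  have "x \<bullet> (A *v x) = 2 * s * A$j$i + A$j$j"
    using \<open>A$i$i = 0\<close> psd_matrix_symmetric[OF A, of i j]
    by (simp add: x_def matrix_scaleR_vector_ac[symmetric] matrix_vector_mult_basis inner_axis'
        column_def algebra_simps)
  also have "\<dots> = -1" using nz by (simp add: s_def field_simps)
  finally show False using A unfolding psd_matrix_def by (metis neg_0_le_iff_le not_one_le_zero)
qed

lemma det_add_multiples_of_row:
  fixes A :: "'a::field^'n^'n"
  shows "det (\<chi> j. if j = i then row i A else row j A + c j *s row i A) = det A"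
proof -
  have partial: "det (\<chi> j. if j \<in> J - {i} then row j A + c j *s row i A else row j A) = det A"
    if "finite J" for J
    using that
  proof (induction J rule: finite_induct)
    case empty
    then show ?case by (simp add: row_def)
  next
    case (insert k J)
    let ?M = "\<chi> j. if j \<in> J - {i} then row j A + c j *s row i A else row j A"
    show ?case
    proof (cases "k = i")
      case True
      then show ?thesis using insert by (simp add: insert_Diff_if)
    next
      case False
      have "row i ?M \<in> {row j ?M |j. j \<noteq> k}" using False by blast
      then have "c k *s row i ?M \<in> vec.span {row j ?M |j. j \<noteq> k}"
        by (intro vec.span_scale vec.span_base)
      moreover have "row i ?M = row i A" by (simp add: row_def)
      ultimately have "c k *s row i A \<in> vec.span {row j ?M |j. j \<noteq> k}" by simp
      then have "det (\<chi> j. if j = k then row k ?M + c k *s row i A else row j ?M) = det ?M"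
        by (rule det_row_span)
      moreover have "(\<chi> j. if j = k then row k ?M + c k *s row i A else row j ?M)
          = (\<chi> j. if j \<in> insert k J - {i} then row j A + c j *s row i A else row j A)"
        using False insert.hyps by (auto simp: row_def vec_eq_iff)
      ultimately show ?thesis using insert.IH by simp
    qed
  qed
  have "(\<chi> j. if j = i then row i A else row j A + c j *s row i A)
      = (\<chi> j. if j \<in> UNIV - {i} then row j A + c j *s row i A else row j A)"
    by (simp add: vec_eq_iff)
  then show ?thesis using partial[of UNIV] by simp
qed

(* Padded with a unit row and column at i, so that it has the same type as A. *)
definition schur_complement :: "real^'n^'n \<Rightarrow> 'n \<Rightarrow> real^'n^'n" where
  "schur_complement A i = A - (1 / A$i$i) *\<^sub>R outer (column i A) + outer (axis i 1)"

lemma schur_complement_nth: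
  "schur_complement A i $ j $ k = A$j$k - A$j$i * A$k$i / A$i$i + (if j = i \<and> k = i then 1 else 0)"
  by (simp add: schur_complement_def outer_def column_def axis_def)

lemma det_schur_complement:
  assumes sym: "\<And>j k. A$j$k = A$k$j" and a: "A$i$i \<noteq> 0"
  shows "det A = A$i$i * det (schur_complement A i)"
proof -
  \<comment> \<open>Eliminate column i by row operations on A, then row i by row operations on the transpose.\<close>
  let ?a = "A$i$i" and ?S = "schur_complement A i"
  define B where "B = (\<chi> j. if j = i then row i A else row j A + (- A$j$i / ?a) *s row i A)"
  define C where "C = (\<chi> k. if k = i then row i (transpose B)
    else row k (transpose B) + (- transpose B $ k $ i / ?a) *s row i (transpose B))"
  have "det C = det B"
    unfolding C_def B_def det_add_multiples_of_row det_transpose ..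
  also have "det B = det A"
    unfolding B_def det_add_multiples_of_row ..
  finally have "det A = det C" ..
  also have "C = (\<chi> k. if k = i then ?a *s axis i 1 else row k ?S)"
    using a by (auto simp: vec_eq_iff C_def B_def row_def transpose_def schur_complement_nth
        axis_def field_simps sym)
  also have "det \<dots> = ?a * det (\<chi> k. if k = i then axis i 1 else row k ?S)"
    by (rule det_row_mul)
  also have "(\<chi> k. if k = i then axis i 1 else row k ?S) = ?S"
    using a by (auto simp: vec_eq_iff row_def schur_complement_nth axis_def sym)
  finally show ?thesis .
qed

lemma psd_matrix_schur_complement:
  fixes A :: "real^'n^'n"
  assumes A: "psd_matrix A" and a: "0 < A$i$i"
  shows "psd_matrix (schur_complement A i)"
  unfolding psd_matrix_def
proof
  have sym: "A$j$k = A$k$j" for j k using psd_matrix_symmetric[OF A] .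
  show "transpose (schur_complement A i) = schur_complement A i"
    by (simp add: vec_eq_iff transpose_def schur_complement_nth sym)
  show "\<forall>x. 0 \<le> x \<bullet> (schur_complement A i *v x)"
  proof
    fix x :: "real^'n"
    let ?c = "column i A"
    define s where "s = (?c \<bullet> x) / A$i$i"
    define y where "y = x - s *\<^sub>R axis i 1"
    have Ax: "(A *v x) $ i = ?c \<bullet> x"
      by (simp add: matrix_vector_mult_def inner_vec_def column_def sym mult.commute)
    have "schur_complement A i *v x = A *v x - s *\<^sub>R ?c + (x$i) *\<^sub>R axis i 1"
      by (simp add: s_def schur_complement_def matrix_vector_mult_add_rdistrib
          matrix_vector_mult_diff_rdistrib scaleR_matrix_vector_assoc[symmetric] outer_mult_vec
          inner_axis')
    then have "x \<bullet> (schur_complement A i *v x) = x \<bullet> (A *v x) - s * (?c \<bullet> x) + (x$i)\<^sup>2"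
      by (simp add: inner_diff_right inner_add_right inner_axis inner_commute power2_eq_square)
    also have "\<dots> = y \<bullet> (A *v y) + (x$i)\<^sup>2"
    proof -
      have Ay: "A *v y = A *v x - s *\<^sub>R ?c"
        by (simp add: y_def matrix_vector_mult_diff_distrib matrix_scaleR_vector_ac
            matrix_vector_mult_basis column_def vec_eq_iff)
      have "?c $ i = A$i$i" by (simp add: column_def)
      then have "y \<bullet> (A *v y) = x \<bullet> (A *v x) - 2 * s * (?c \<bullet> x) + s\<^sup>2 * A$i$i"
        unfolding Ay unfolding y_def
        by (simp add: inner_diff_left inner_diff_right inner_axis' Ax inner_commute
            algebra_simps power2_eq_square)
      then show ?thesis
        using a by (simp add: s_def field_simps power2_eq_square)
    qed
    finally show "0 \<le> x \<bullet> (schur_complement A i *v x)"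
      using A unfolding psd_matrix_def by (metis add_nonneg_nonneg zero_le_power2)
  qed
qed

lemma schur_complement_row_self:
  assumes "\<And>j k. A$j$k = A$k$j" and "A$i$i \<noteq> 0"
  shows "row i (schur_complement A i) = axis i 1"
  using assms by (simp add: vec_eq_iff row_def schur_complement_nth axis_def)

lemma schur_complement_row_unit:
  assumes "row j A = axis j 1" and "j \<noteq> i"
  shows "row j (schur_complement A i) = axis j 1"
proof -
  have "A$j$k = (if k = j then 1 else 0)" for k
    using assms(1) by (simp add: vec_eq_iff row_def axis_def)
  then show ?thesis
    using assms(2) by (simp add: vec_eq_iff row_def schur_complement_nth axis_def)
qed

lemma schur_complement_diag_le:
  assumes "0 < A$i$i" and "j \<noteq> i"
  shows "schur_complement A i $ j $ j \<le> A$j$j"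
  using assms by (simp add: schur_complement_nth divide_nonneg_pos)

lemma hadamard_inequality_partial:
  fixes A :: "real^'n^'n"
  assumes "psd_matrix A" and "\<forall>j. j \<notin> K \<longrightarrow> row j A = axis j 1"
  shows "det A \<le> (\<Prod>j\<in>K. A$j$j)"
  using finite[of K] assms
proof (induction K arbitrary: A rule: finite_induct)
  case empty
  then have "A = mat 1" by (simp add: vec_eq_iff row_def mat_def axis_def)
  then show ?case by simp
next
  case (insert i K)
  note A = \<open>psd_matrix A\<close>
  have sym: "A$j$k = A$k$j" for j k using psd_matrix_symmetric[OF A] .
  show ?case
  proof (cases "A$i$i = 0")
    case True
    have "A$i$k = 0" for k
      using psd_matrix_zero_diag[OF A True, of k] sym by simp
    then have "row i A = 0" by (simp add: row_def vec_eq_iff)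
    then show ?thesis using insert.hyps True by (simp add: det_zero_row)
  next
    case False
    then have a: "0 < A$i$i" using psd_matrix_diag_nonneg[OF A, of i] by simp
    let ?S = "schur_complement A i"
    have S: "psd_matrix ?S" using psd_matrix_schur_complement[OF A a] .
    have "\<forall>j. j \<notin> K \<longrightarrow> row j ?S = axis j 1"
    proof (intro allI impI)
      fix j assume "j \<notin> K"
      then show "row j ?S = axis j 1"
        using insert.prems schur_complement_row_self[OF sym False]
        by (cases "j = i") (auto intro: schur_complement_row_unit)
    qed
    then have "det ?S \<le> (\<Prod>j\<in>K. ?S$j$j)"
      using insert.IH S by blast
    also have "\<dots> \<le> (\<Prod>j\<in>K. A$j$j)"
    proof (rule prod_mono)
      fix j assume "j \<in> K"
      then show "0 \<le> ?S$j$j \<and> ?S$j$j \<le> A$j$j"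
        using insert.hyps psd_matrix_diag_nonneg[OF S] schur_complement_diag_le[OF a, of j] by auto
    qed
    finally have "A$i$i * det ?S \<le> A$i$i * (\<Prod>j\<in>K. A$j$j)"
      using a by simp
    then show ?thesis
      using det_schur_complement[OF sym False] insert.hyps by simp
  qed
qed

theorem hadamard_inequality:
  fixes A :: "real^'n^'n"
  assumes "psd_matrix A"
  shows "det A \<le> (\<Prod>j\<in>UNIV. A$j$j)"
  using hadamard_inequality_partial[OF assms] by simp

section \<open>Equal-weight saturated designs\<close>

definition moment_matrix ::
    "real^4 \<Rightarrow> (real \<times> real \<Rightarrow> real^'n) \<Rightarrow> ((real \<times> real) \<times> real) list \<Rightarrow> real^'n^'n" where
  "moment_matrix \<beta> g \<eta> = sum_list (map (\<lambda>(x, w). (w * intensity \<beta> x) *\<^sub>R outer (g x)) \<eta>)"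

lemma info_matrix_eq_moment_matrix: "info_matrix \<beta> \<eta> = moment_matrix \<beta> regf \<eta>"
  by (simp add: info_matrix_def moment_matrix_def outer_def)

lemma moment_matrix_nth:
  "moment_matrix \<beta> g \<eta> $ i $ j
     = sum_list (map (\<lambda>(x, w). w * intensity \<beta> x * (g x $ i * g x $ j)) \<eta>)"
  by (induction \<eta>) (auto simp: moment_matrix_def outer_def)

lemma outer_vector_matrix_mult: "outer (v v* F) = transpose F ** outer v ** F"
  by (simp add: vec_eq_iff outer_def matrix_matrix_mult_def vector_matrix_mult_def transpose_def
      sum_product sum_distrib_left sum_distrib_right mult_ac)

lemma moment_matrix_congruence:
  assumes "\<And>y. g y = h y v* F"
  shows "moment_matrix \<beta> g \<eta> = transpose F ** moment_matrix \<beta> h \<eta> ** F"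
proof (induction \<eta>)
  case Nil
  then show ?case by (simp add: moment_matrix_def vec_eq_iff matrix_matrix_mult_def)
next
  case (Cons p \<eta>)
  have linear: "transpose F ** (c *\<^sub>R A + B) ** F
      = c *\<^sub>R (transpose F ** A ** F) + transpose F ** B ** F" for c A B
    by (simp add: matrix_matrix_mult_def vec_eq_iff sum.distrib sum_distrib_left algebra_simps)
  show ?case
    using Cons by (cases p) (simp add: moment_matrix_def assms outer_vector_matrix_mult linear)
qed

lemma psd_moment_matrix:
  assumes "\<forall>(x, w) \<in> set \<eta>. 0 \<le> w"
  shows "psd_matrix (moment_matrix \<beta> g \<eta>)"
  using assms
proof (induction \<eta>)
  case Nil
  then show ?case by (simp add: moment_matrix_def psd_matrix_zero)
next
  case (Cons p \<eta>)
  then show ?case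
    by (cases p) (auto simp: moment_matrix_def intensity_def
        intro!: psd_matrix_add psd_matrix_scaleR psd_matrix_outer)
qed

lemma moment_matrix_weighted_trace_le:
  assumes sensitivity: "\<And>y. y \<in> X \<Longrightarrow> intensity \<beta> y * (\<Sum>k\<in>UNIV. (g y $ k)\<^sup>2 / \<mu> k) \<le> 1"
    and "\<forall>(x, w) \<in> set \<eta>. x \<in> X \<and> 0 \<le> w"
  shows "(\<Sum>k\<in>UNIV. moment_matrix \<beta> g \<eta> $ k $ k / \<mu> k) \<le> sum_list (map snd \<eta>)"
  using assms(2)
proof (induction \<eta>)
  case Nil
  then show ?case by (simp add: moment_matrix_def)
next
  case (Cons p \<eta>)
  obtain x w where p: "p = (x, w)" by (cases p)
  have "(\<Sum>k\<in>UNIV. moment_matrix \<beta> g (p # \<eta>) $ k $ k / \<mu> k)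
      = w * (intensity \<beta> x * (\<Sum>k\<in>UNIV. (g x $ k)\<^sup>2 / \<mu> k))
        + (\<Sum>k\<in>UNIV. moment_matrix \<beta> g \<eta> $ k $ k / \<mu> k)"
    by (simp add: moment_matrix_nth p sum.distrib sum_distrib_left add_divide_distrib
        power2_eq_square mult.assoc)
  also have "\<dots> \<le> w * 1 + sum_list (map snd \<eta>)"
    using Cons sensitivity[of x] p by (intro add_mono mult_left_mono) auto
  finally show ?case by (simp add: p)
qed

lemma det_moment_matrix_le:
  fixes g :: "real \<times> real \<Rightarrow> real^'n" and \<mu> :: "'n \<Rightarrow> real"
  assumes sensitivity: "\<And>y. y \<in> X \<Longrightarrow> intensity \<beta> y * (\<Sum>k\<in>UNIV. (g y $ k)\<^sup>2 / \<mu> k) \<le> 1"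
    and \<mu>_pos: "\<And>k. 0 < \<mu> k" and "is_design X \<eta>"
  shows "det (moment_matrix \<beta> g \<eta>) \<le> (\<Prod>k\<in>UNIV. \<mu> k) * (1 / CARD('n)) ^ CARD('n)"
proof -
  have supp: "\<forall>(y, w) \<in> set \<eta>. y \<in> X \<and> 0 \<le> w" and "sum_list (map snd \<eta>) = 1"
    using \<open>is_design X \<eta>\<close> by (auto simp: is_design_def)
  let ?N = "moment_matrix \<beta> g \<eta>"
  have psd: "psd_matrix ?N"
    using supp by (intro psd_moment_matrix) auto
  define d where "d k = ?N $ k $ k / \<mu> k" for k
  have d_nonneg: "0 \<le> d k" for k
    unfolding d_def by (intro divide_nonneg_pos psd_matrix_diag_nonneg[OF psd] \<mu>_pos)
  have "sum d UNIV \<le> 1"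
    using moment_matrix_weighted_trace_le[OF sensitivity supp] \<open>sum_list (map snd \<eta>) = 1\<close>
    by (simp add: d_def)
  have "det ?N \<le> (\<Prod>k\<in>UNIV. ?N $ k $ k)"
    using psd by (rule hadamard_inequality)
  also have "\<dots> = (\<Prod>k\<in>UNIV. \<mu> k) * prod d UNIV"
    using \<mu>_pos by (simp add: d_def prod.distrib[symmetric] less_imp_neq[symmetric])
  also have "\<dots> \<le> (\<Prod>k\<in>UNIV. \<mu> k) * (1 / CARD('n)) ^ CARD('n)"
    using prod_le_inverse_card_power[of UNIV d] d_nonneg \<open>sum d UNIV \<le> 1\<close> \<mu>_pos
    by (intro mult_left_mono prod_nonneg) (auto intro: less_imp_le)
  finally show ?thesis .
qed

lemma equal_weight_saturated_design_D_optimal: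
  fixes x :: "4 \<Rightarrow> real \<times> real" and g :: "real \<times> real \<Rightarrow> real^4"
  assumes interpolation: "\<And>y. regf y = (\<Sum>k\<in>UNIV. g y $ k *\<^sub>R regf (x k))"
    and nodes: "\<And>k. g (x k) = axis k 1"
    and in_X: "\<And>k. x k \<in> X"
    and sensitivity: "\<And>y. y \<in> X \<Longrightarrow> intensity \<beta> y * (\<Sum>k\<in>UNIV. (g y $ k)\<^sup>2 / intensity \<beta> (x k)) \<le> 1"
  shows "locally_D_optimal \<beta> X [(x 1, 1/4), (x 2, 1/4), (x 3, 1/4), (x 4, 1/4)]"
proof -
  let ?\<xi> = "[(x 1, 1/4), (x 2, 1/4), (x 3, 1/4), (x 4, 1/4)] :: ((real \<times> real) \<times> real) list"
  let ?\<mu> = "\<lambda>k. intensity \<beta> (x k)"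
  define F :: "real^4^4" where "F = (\<chi> k. regf (x k))"
  have "regf y = g y v* F" for y
    by (subst interpolation) (simp add: vec_eq_iff vector_matrix_mult_def F_def mult.commute)
  then have det_info: "det (info_matrix \<beta> \<eta>) = det F * det F * det (moment_matrix \<beta> g \<eta>)" for \<eta>
    by (simp add: info_matrix_eq_moment_matrix moment_matrix_congruence[of regf g F] det_mul)
  have "moment_matrix \<beta> g ?\<xi> $ i $ j = (if i = j then ?\<mu> i / 4 else 0)" for i j
    using exhaust_4[of i] by (auto simp: moment_matrix_nth nodes axis_def)
  then have det_\<xi>: "det (moment_matrix \<beta> g ?\<xi>) = (\<Prod>k\<in>UNIV. ?\<mu> k) * (1/4)^4"
    by (simp add: det_diagonal prod_dividef power_divide)
  have "inj x"
    by (rule injI) (metis nodes axis_eq_axis zero_neq_one)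
  then have "is_design X ?\<xi>"
    by (simp add: is_design_def in_X inj_eq)
  moreover have "det (moment_matrix \<beta> g \<eta>) \<le> det (moment_matrix \<beta> g ?\<xi>)" if "is_design X \<eta>" for \<eta>
    using det_moment_matrix_le[OF sensitivity _ that] by (simp add: det_\<xi> intensity_def)
  ultimately show ?thesis
    unfolding locally_D_optimal_def det_info by (auto intro: mult_left_mono)
qed

section \<open>The Poisson model with interaction\<close>

lemma intensity_interaction_model:
  "intensity (vector [\<beta>0, - b1, - b2, - \<rho> * b1 * b2]) (y1, y2)
     = exp \<beta>0 * exp (- (b1 * y1 + b2 * y2 + \<rho> * (b1 * y1) * (b2 * y2)))"
  by (simp add: intensity_def regf_def inner_vec_def sum_4 exp_add[symmetric] algebra_simps)

lemma interaction_model_sensitivity: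
  fixes \<beta>0 b1 b2 \<rho> t y1 y2 :: real
  assumes b: "0 < b1" "0 < b2" and t: "0 < t" "0 \<le> \<rho>" "\<rho> * t^2 + t = 2"
    and y: "0 \<le> y1" "0 \<le> y2"
  defines "\<beta> \<equiv> vector [\<beta>0, - b1, - b2, - \<rho> * b1 * b2] :: real^4"
    and "l \<equiv> std_lagrange_basis t (b1 * y1) (b2 * y2)"
  shows "intensity \<beta> (y1, y2) * ((l $ 1)\<^sup>2 / intensity \<beta> (0, 0)
           + (l $ 2)\<^sup>2 / intensity \<beta> (2 / b1, 0) + (l $ 3)\<^sup>2 / intensity \<beta> (0, 2 / b2)
           + (l $ 4)\<^sup>2 / intensity \<beta> (t / b1, t / b2)) \<le> 1"
proof -
  have intensity: "intensity \<beta> (a / b1, c / b2) = exp \<beta>0 / exp (a + c + \<rho> * a * c)" for a c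
  proof -
    have "intensity \<beta> (a / b1, c / b2) * exp (a + c + \<rho> * a * c) = exp \<beta>0"
      using b unfolding \<beta>_def intensity_interaction_model
      by (simp add: mult.assoc exp_add[symmetric])
    then show ?thesis by (simp add: eq_divide_eq)
  qed
  have "\<rho> * (t * t) = 2 - t" using t by (simp add: power2_eq_square)
  then have nodes: "intensity \<beta> (0, 0) = exp \<beta>0" "intensity \<beta> (2 / b1, 0) = exp \<beta>0 / exp 2"
    "intensity \<beta> (0, 2 / b2) = exp \<beta>0 / exp 2" "intensity \<beta> (t / b1, t / b2) = exp \<beta>0 / exp (t + 2)"
    using intensity[of 0 0] intensity[of 2 0] intensity[of 0 2] intensity[of t t]
    by (simp_all add: mult.assoc)
  define \<eta> where "\<eta> = b1 * y1 + b2 * y2 + \<rho> * (b1 * y1) * (b2 * y2)"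
  have at_y: "intensity \<beta> (y1, y2) = exp \<beta>0 / exp \<eta>"
    using intensity[of "b1 * y1" "b2 * y2"] b by (simp add: \<eta>_def)
  have "intensity \<beta> (y1, y2) * ((l $ 1)\<^sup>2 / intensity \<beta> (0, 0)
           + (l $ 2)\<^sup>2 / intensity \<beta> (2 / b1, 0) + (l $ 3)\<^sup>2 / intensity \<beta> (0, 2 / b2)
           + (l $ 4)\<^sup>2 / intensity \<beta> (t / b1, t / b2))
      = ((l $ 1)\<^sup>2 + exp 2 * (l $ 2)\<^sup>2 + exp 2 * (l $ 3)\<^sup>2 + exp (t + 2) * (l $ 4)\<^sup>2) / exp \<eta>"
    unfolding at_y nodes by (simp add: field_simps)
  moreover have
    "(l $ 1)\<^sup>2 + exp 2 * (l $ 2)\<^sup>2 + exp 2 * (l $ 3)\<^sup>2 + exp (t + 2) * (l $ 4)\<^sup>2 \<le> exp \<eta>"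
  proof -
    have "0 \<le> \<rho> * t^2" using t by simp
    then have "t \<le> 2" using t by linarith
    moreover have "\<rho> = (2 - t) / t^2" using t by (simp add: field_simps)
    ultimately show ?thesis
      using std_lagrange_basis_sensitivity[of "b1 * y1" "b2 * y2" t] b t y
      by (simp add: l_def \<eta>_def mult.assoc)
  qed
  ultimately show ?thesis by simp
qed

lemma interaction_design_D_optimal:
  fixes \<beta>0 b1 b2 \<rho> t :: real
  assumes b: "0 < b1" "0 < b2" and t: "0 < t" "0 \<le> \<rho>" "\<rho> * t^2 + t = 2"
  shows "locally_D_optimal (vector [\<beta>0, - b1, - b2, - \<rho> * b1 * b2]) ({0..} \<times> {0..})
           [((0, 0), 1/4), ((2 / b1, 0), 1/4), ((0, 2 / b2), 1/4), ((t / b1, t / b2), 1/4)]"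
proof -
  define x :: "4 \<Rightarrow> real \<times> real" where
    "x k = (if k = 1 then (0, 0) else if k = 2 then (2 / b1, 0) else if k = 3 then (0, 2 / b2)
            else (t / b1, t / b2))" for k
  define g where "g y = std_lagrange_basis t (b1 * fst y) (b2 * snd y)" for y
  have "locally_D_optimal (vector [\<beta>0, - b1, - b2, - \<rho> * b1 * b2]) ({0..} \<times> {0..})
      [(x 1, 1/4), (x 2, 1/4), (x 3, 1/4), (x 4, 1/4)]"
  proof (rule equal_weight_saturated_design_D_optimal)
    show "regf y = (\<Sum>k\<in>UNIV. g y $ k *\<^sub>R regf (x k))" for y
      using b t by (simp add: vec_eq_iff forall_4 sum_4 regf_def g_def std_lagrange_basis_def x_def
          field_simps power2_eq_square)
    show "g (x k) = axis k 1" for k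
      using b t exhaust_4[of k]
      by (auto simp: g_def x_def std_lagrange_basis_def vec_eq_iff forall_4 axis_def field_simps
          power2_eq_square)
    show "x k \<in> {0..} \<times> {0..}" for k
      using b t by (simp add: x_def)
    show "intensity (vector [\<beta>0, - b1, - b2, - \<rho> * b1 * b2]) y
        * (\<Sum>k\<in>UNIV. (g y $ k)\<^sup>2 / intensity (vector [\<beta>0, - b1, - b2, - \<rho> * b1 * b2]) (x k)) \<le> 1"
      if "y \<in> {0..} \<times> {0..}" for y
      using interaction_model_sensitivity[OF b t, of "fst y" "snd y" \<beta>0] that
      by (auto simp: sum_4 x_def g_def)
  qed
  then show ?thesis by (simp add: x_def)
qed

lemma positive_root_quadratic:
  fixes \<rho> :: real
  assumes "0 < \<rho>"
  shows "0 < (sqrt (1 + 8 * \<rho>) - 1) / (2 * \<rho>)"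
    and "\<rho> * ((sqrt (1 + 8 * \<rho>) - 1) / (2 * \<rho>))^2 + (sqrt (1 + 8 * \<rho>) - 1) / (2 * \<rho>) = 2"
proof -
  define s where "s = sqrt (1 + 8 * \<rho>)"
  have s: "1 < s" "s * s = 1 + 8 * \<rho>"
    using assms by (simp_all add: s_def)
  then show "0 < (s - 1) / (2 * \<rho>)"
    using assms by simp
  have "\<rho> * ((s - 1) / (2 * \<rho>))^2 + (s - 1) / (2 * \<rho>) = (s * s - 1) / (4 * \<rho>)"
    using assms by (simp add: field_simps power2_eq_square)
  then show "\<rho> * ((s - 1) / (2 * \<rho>))^2 + (s - 1) / (2 * \<rho>) = 2"
    using assms s by simp
qed

theorem theorem3:
  fixes \<beta>0 \<beta>1 \<beta>2 \<beta>12 :: real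
  assumes "\<beta>1 < 0" and "\<beta>2 < 0" and "\<beta>12 \<le> 0"
  defines "\<rho> \<equiv> - \<beta>12 / (\<beta>1 * \<beta>2)"
  defines "t \<equiv> (if \<beta>12 < 0 then (sqrt (1 + 8 * \<rho>) - 1) / (2 * \<rho>) else 2)"
  shows "locally_D_optimal (vector [\<beta>0, \<beta>1, \<beta>2, \<beta>12]) ({0..} \<times> {0..})
           [((0, 0), 1/4), ((2 / \<bar>\<beta>1\<bar>, 0), 1/4), ((0, 2 / \<bar>\<beta>2\<bar>), 1/4),
            ((t / \<bar>\<beta>1\<bar>, t / \<bar>\<beta>2\<bar>), 1/4)]"
proof -
  have "0 < \<beta>1 * \<beta>2" using assms by (simp add: mult_neg_neg)
  then have \<rho>: "0 \<le> \<rho>" "\<beta>12 = - \<rho> * \<bar>\<beta>1\<bar> * \<bar>\<beta>2\<bar>"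
    using assms by (auto simp: \<rho>_def divide_nonpos_pos)
  have "0 < t \<and> \<rho> * t^2 + t = 2"
  proof (cases "\<beta>12 < 0")
    case True
    then have "0 < \<rho>" using \<open>0 < \<beta>1 * \<beta>2\<close> by (simp add: \<rho>_def divide_neg_pos)
    then show ?thesis using positive_root_quadratic[of \<rho>] True by (simp add: t_def)
  next
    case False
    then show ?thesis using assms by (simp add: \<rho>_def t_def)
  qed
  moreover have coeffs: "- \<bar>\<beta>1\<bar> = \<beta>1" "- \<bar>\<beta>2\<bar> = \<beta>2" "- \<rho> * \<bar>\<beta>1\<bar> * \<bar>\<beta>2\<bar> = \<beta>12"
    using assms(1,2) \<rho>(2) by simp_all
  ultimately show ?thesis
    using interaction_design_D_optimal[of "\<bar>\<beta>1\<bar>" "\<bar>\<beta>2\<bar>" t \<rho> \<beta>0, unfolded coeffs]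
      assms \<rho>(1) by simp
qed

end
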